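(* Let $L=8$ and let $B=2^s\ge 8$. Let $\alpha_0,\dots,\alpha_{B-1}$ be nonzero real LLRs of one list path at a single parity-check (SPC) constituent block, indexed so that $|\alpha_0|<|\alpha_1|<\cdots<|\alpha_{B-1}|$, and let $\beta\in\{0,1\}^B$ with $\beta_j=\frac{1-\mathrm{sgn}(\alpha_j)}{2}$. For an even-weight vector $\hat\beta\in\{0,1\}^B$ (a codeword of the SPC block) define $\Delta(\hat\beta)=\sum_{j=0}^{B-1}|\hat\beta_j-\beta_j|\,|\alpha_j|$. Define a set $\mathcal C$ of 13 even-weight vectors as follows. If $\sum_j\beta_j\equiv 0\pmod 2$: $\mathcal C$ consists of $\beta$; $\beta\oplus e_0\oplus e_t$ for $t=1,\dots,7$; $\beta\oplus e_1\oplus e_2$; $\beta\oplus e_1\oplus e_3$; $\beta\oplus e_1\oplus e_4$; $\beta\oplus e_2\oplus e_3$; $\beta\oplus e_0\oplus e_1\oplus e_2\oplus e_3$. If $\sum_j\beta_j\equiv 1\pmod 2$: $\mathcal C$ consists of $\beta\oplus e_t$ for $t=0,\dots,7$; $\beta\oplus e_0\oplus e_1\oplus e_2$; $\beta\oplus e_0\oplus e_1\oplus e_3$; $\beta\oplus e_0\oplus e_2\oplus e_3$; $\beta\oplus e_1\oplus e_2\oplus e_3$; $\beta\oplus e_0\oplus e_1\oplus e_4$. Then the $L=8$ surviving sub-paths of this path can be obtained from $\mathcal C$: there is a set $S\subseteq\mathcal C$ with $|S|=8$ such that $\Delta(v)\le\Delta(w)$ for all $v\in S$ and all even-weight $w\in\{0,1\}^B\setminus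 S$. Consequently, in one-time path extension of all 8 list paths followed by pruning to the 8 paths of smallest path metric, restricting each path's extensions to these 13 error patterns incurs no loss.
   Context: Setting: successive-cancellation list (SCL) decoding of a polar code with list size $L$. An SPC constituent block of length $B$ is one whose valid outputs are exactly the vectors $\hat\beta\in\{0,1\}^B$ with $\sum_j\hat\beta_j\equiv 0\pmod 2$. Each list path $l$ has a path metric $\mathrm{PM}^l$; extending it by block output $\hat\beta$ gives new path metric $\mathrm{PM}^l+\Delta(\hat\beta)$, and after extension the $L$ extended paths (over all parent paths) with smallest path metric survive. $e_p\in\{0,1\}^B$ has a $1$ in position $p$ (positions indexed $0,\dots,B-1$ in the sorted order above) and $0$ elsewhere; $\oplus$ is componentwise XOR. *)

theory Defs
  imports Complex_Main
begin

text \<open>Binary vectors of length B are modelled as functions nat => bool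
  that vanish (are False) outside positions 0..B-1; True means bit 1.\<close>

definition binvecs :: "nat \<Rightarrow> (nat \<Rightarrow> bool) set" where
  "binvecs B = {v. \<forall>j\<ge>B. \<not> v j}"

definition hweight :: "nat \<Rightarrow> (nat \<Rightarrow> bool) \<Rightarrow> nat" where
  "hweight B v = card {j. j < B \<and> v j}"

definition spc_words :: "nat \<Rightarrow> (nat \<Rightarrow> bool) set" where
  "spc_words B = {v \<in> binvecs B. even (hweight B v)}"

definition unitv :: "nat \<Rightarrow> nat \<Rightarrow> bool" where
  "unitv p = (\<lambda>j. j = p)"

definition xorv :: "(nat \<Rightarrow> bool) \<Rightarrow> (nat \<Rightarrow> bool) \<Rightarrow> nat \<Rightarrow> bool" (infixl "\<oplus>\<^sub>v" 65) where
  "v \<oplus>\<^sub>v w = (\<lambda>j. v j \<noteq> w j)"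

text \<open>Hard decision: beta_j = (1 - sgn alpha_j)/2, i.e. 1 iff alpha_j < 0.\<close>
definition hard_dec :: "nat \<Rightarrow> (nat \<Rightarrow> real) \<Rightarrow> nat \<Rightarrow> bool" where
  "hard_dec B \<alpha> = (\<lambda>j. j < B \<and> \<alpha> j < 0)"

definition Delta :: "nat \<Rightarrow> (nat \<Rightarrow> real) \<Rightarrow> (nat \<Rightarrow> bool) \<Rightarrow> real" where
  "Delta B \<alpha> v = (\<Sum>j<B. (if v j \<noteq> hard_dec B \<alpha> j then 1 else 0) * \<bar>\<alpha> j\<bar>)"

text \<open>The 13 candidate error patterns (lists of flipped positions).\<close>
definition patterns_even :: "nat list list" where
  "patterns_even = [[]] @ map (\<lambda>t. [0, t]) [1..<8] @
     [[1,2],[1,3],[1,4],[2,3],[0,1,2,3]]"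

definition patterns_odd :: "nat list list" where
  "patterns_odd = map (\<lambda>t. [t]) [0..<8] @
     [[0,1,2],[0,1,3],[0,2,3],[1,2,3],[0,1,4]]"

definition apply_pattern :: "(nat \<Rightarrow> bool) \<Rightarrow> nat list \<Rightarrow> nat \<Rightarrow> bool" where
  "apply_pattern v ps = foldl (\<lambda>w p. w \<oplus>\<^sub>v unitv p) v ps"

definition candC :: "nat \<Rightarrow> (nat \<Rightarrow> real) \<Rightarrow> (nat \<Rightarrow> bool) set" where
  "candC B \<alpha> = (let \<beta> = hard_dec B \<alpha> in
     if even (hweight B \<beta>) then apply_pattern \<beta> ` set patterns_even
     else apply_pattern \<beta> ` set patterns_odd)"

end

theory Submission
  imports Defs
begin

(* Relative to the hard decision beta, a word w is described by its error set
   E = {j < B. w j \<noteq> beta j}: Delta w is the sum of the magnitudes over E, and w has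
   even weight iff card E has the parity of the weight of beta.  Since the magnitudes
   increase with the position, an error set of the right parity that is not one of
   the 13 patterns is beaten by 8 of them (e.g. every {0, t} with t \<le> 7 costs at most
   as much as {0, j} with j \<ge> 8, and 8 patterns inside {0, 1, 2, 3} beat any E with
   card E \<ge> 4).  So the 8 cheapest candidates beat every word outside the candidate set.
   For the whole list, take the 8 cheapest of the 8 x 8 per-path survivors: an
   extension of path l outside its own survivors is beaten by all 8 of them, hence by
   the 8 selected ones. *)

lemma exists_lowest_subset:
  fixes f :: "'a \<Rightarrow> 'b::linorder"
  assumes "finite K" "k \<le> card K"
  shows "\<exists>S\<subseteq>K. card S = k \<and> (\<forall>x\<in>S. \<forall>y\<in>K - S. f x \<le> f y)"
  using assms(2)
proof (induction k)
  case 0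
  show ?case by (intro exI[of _ "{}"]) simp
next
  case (Suc k)
  then obtain S where S: "S \<subseteq> K" "card S = k" "\<forall>x\<in>S. \<forall>y\<in>K - S. f x \<le> f y"
    by auto
  have "finite S" using S(1) assms(1) by (rule finite_subset)
  have "card (K - S) = card K - k" using card_Diff_subset[OF \<open>finite S\<close> S(1)] S(2) by simp
  then have "card (K - S) > 0" using Suc.prems by simp
  then have "K - S \<noteq> {}" by (simp add: card_gt_0_iff)
  define m where "m = arg_min_on f (K - S)"
  have m: "m \<in> K - S" "\<forall>y\<in>K - S. f m \<le> f y"
    using arg_min_if_finite[of "K - S" f] assms(1) \<open>K - S \<noteq> {}\<close> unfolding m_def
    by (auto simp: not_less)
  have "card (insert m S) = Suc k" using m(1) S(2) \<open>finite S\<close> by simp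
  moreover have "\<forall>x\<in>insert m S. \<forall>y\<in>K - insert m S. f x \<le> f y" using m S(3) by blast
  ultimately show ?case using m(1) S(1) by (intro exI[of _ "insert m S"]) auto
qed

lemma lowest_subset_le_bound:
  fixes f :: "'a \<Rightarrow> 'b::linorder"
  assumes "finite C" "S \<subseteq> C" "card S = k" "\<forall>x\<in>S. \<forall>y\<in>C - S. f x \<le> f y"
    and "D \<subseteq> C" "card D = k" "\<forall>d\<in>D. f d \<le> c" and "x \<in> S"
  shows "f x \<le> c"
proof (cases "D \<subseteq> S")
  case True
  then have "D = S" using card_subset_eq assms(1-3,6) finite_subset by metis
  then show ?thesis using assms(7,8) by blast
next
  case False
  then obtain d where "d \<in> C - S" "d \<in> D" using assms(5) by blast
  then show ?thesis using assms(4,7,8) order_trans by blast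
qed

lemma lowest_subsets_merge:
  fixes f :: "'i \<Rightarrow> 'a \<Rightarrow> 'b::linorder"
  assumes "finite I" "I \<noteq> {}"
    and S: "\<And>l. l \<in> I \<Longrightarrow> finite (S l) \<and> card (S l) = k \<and>
              (\<forall>v\<in>S l. \<forall>w\<in>W l - S l. f l v \<le> f l w)"
  shows "\<exists>T \<subseteq> Sigma I S. card T = k \<and>
           (\<forall>(l, v)\<in>T. \<forall>l'\<in>I. \<forall>w\<in>W l'. (l', w) \<notin> T \<longrightarrow> f l v \<le> f l' w)"
proof -
  define U where "U = Sigma I S"
  have fin: "\<forall>l\<in>I. finite (S l)" using S by blast
  have "finite U" unfolding U_def using assms(1) fin by blast
  have "card U = card I * k" unfolding U_def using card_SigmaI[OF assms(1) fin] S by simp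
  moreover have "card I \<ge> 1" using assms(1,2) by (simp add: Suc_le_eq card_gt_0_iff)
  ultimately have "k \<le> card U" by simp
  then obtain T where T: "T \<subseteq> U" "card T = k"
      "\<forall>x\<in>T. \<forall>y\<in>U - T. case_prod f x \<le> case_prod f y"
    using exists_lowest_subset[OF \<open>finite U\<close>] by blast
  have "f l v \<le> f l' w"
    if "(l, v) \<in> T" "l' \<in> I" "w \<in> W l'" "(l', w) \<notin> T" for l v l' w
  proof (cases "w \<in> S l'")
    case True
    then have "(l', w) \<in> U - T" using that(2,4) unfolding U_def by blast
    then have "case_prod f (l, v) \<le> case_prod f (l', w)" using T(3) that(1) by blast
    then show ?thesis by simp
  next
    case False
    have "{l'} \<times> S l' \<subseteq> U" unfolding U_def using that(2) by blast
    moreover have "card ({l'} \<times> S l') = k" using S[OF that(2)] by (simp add: card_cartesian_product)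
    moreover have "\<forall>d\<in>{l'} \<times> S l'. case_prod f d \<le> f l' w" using S[OF that(2)] False that(3) by auto
    ultimately show ?thesis
      using lowest_subset_le_bound[OF \<open>finite U\<close> T, of "{l'} \<times> S l'" "f l' w" "(l, v)"] that(1) by simp
  qed
  then have "\<forall>(l, v)\<in>T. \<forall>l'\<in>I. \<forall>w\<in>W l'. (l', w) \<notin> T \<longrightarrow> f l v \<le> f l' w" by auto
  then show ?thesis using T(1,2) unfolding U_def by blast
qed

lemma sum_lessThan_card_le:
  fixes a :: "nat \<Rightarrow> 'b::ordered_comm_monoid_add"
  assumes mono: "\<And>i j. i \<le> j \<Longrightarrow> j < B \<Longrightarrow> a i \<le> a j" and "E \<subseteq> {..<B}"
  shows "sum a {..<card E} \<le> sum a E"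
  using assms(2)
proof (induction "card E" arbitrary: E)
  case 0
  then have "E = {}" by (metis card_0_eq finite_lessThan finite_subset)
  then show ?case by simp
next
  case (Suc n)
  have "finite E" using Suc.prems finite_subset by blast
  define m where "m = Max E"
  have "E \<noteq> {}" using Suc.hyps by auto
  then have "m \<in> E" using \<open>finite E\<close> unfolding m_def by simp
  have "E \<subseteq> {..m}" using \<open>finite E\<close> unfolding m_def by auto
  then have "n \<le> m" using card_mono[of "{..m}" E] Suc.hyps by simp
  have "card (E - {m}) = n" using Suc.hyps \<open>m \<in> E\<close> by simp
  then have "sum a {..<n} \<le> sum a (E - {m})" using Suc.hyps(1) Suc.prems by blast
  moreover have "a n \<le> a m" using mono \<open>n \<le> m\<close> \<open>m \<in> E\<close> Suc.prems by blast
  ultimately have "sum a {..<n} + a n \<le> sum a (E - {m}) + a m" by (rule add_mono)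
  then show ?case using \<open>m \<in> E\<close> \<open>finite E\<close> by (simp add: sum.remove add.commute flip: Suc.hyps(2))
qed

lemma sum_le_sum_if_subset_lessThan:
  fixes a :: "nat \<Rightarrow> 'b::ordered_comm_monoid_add"
  assumes "\<And>j. 0 \<le> a j" and "\<And>i j. i \<le> j \<Longrightarrow> j < B \<Longrightarrow> a i \<le> a j"
    and "E \<subseteq> {..<B}" "P \<subseteq> {..<n}" "n \<le> card E"
  shows "sum a P \<le> sum a E"
proof -
  have "sum a P \<le> sum a {..<card E}" using assms(1,4,5) by (intro sum_mono2) auto
  also have "\<dots> \<le> sum a E" by (rule sum_lessThan_card_le) (use assms(2,3) in auto)
  finally show ?thesis .
qed

lemma apply_pattern_eq:
  "distinct ps \<Longrightarrow> apply_pattern v ps = (\<lambda>j. v j \<noteq> (j \<in> set ps))"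
proof (induction ps arbitrary: v)
  case Nil
  then show ?case by (simp add: apply_pattern_def)
next
  case (Cons p ps)
  have "apply_pattern v (p # ps) = apply_pattern (v \<oplus>\<^sub>v unitv p) ps"
    by (simp add: apply_pattern_def)
  then show ?case using Cons by (auto simp: xorv_def unitv_def)
qed

lemma inj_on_apply_pattern: "inj_on (apply_pattern v) {ps. sorted_wrt (<) ps}"
proof (rule inj_onI)
  fix ps qs
  assume "ps \<in> {ps. sorted_wrt (<) ps}" "qs \<in> {ps. sorted_wrt (<) ps}"
    and "apply_pattern v ps = apply_pattern v qs"
  then have "set ps = set qs" by (auto simp: apply_pattern_eq strict_sorted_iff fun_eq_iff)
  then show "ps = qs" using \<open>ps \<in> _\<close> \<open>qs \<in> _\<close> by (simp add: strict_sorted_equal)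
qed

lemma binvec_eq_apply_pattern:
  assumes "v \<in> binvecs B" "w \<in> binvecs B" "distinct ps" "{j. j < B \<and> w j \<noteq> v j} = set ps"
  shows "w = apply_pattern v ps"
proof
  fix j
  have "j \<in> set ps \<longleftrightarrow> j < B \<and> w j \<noteq> v j" using assms(4) by blast
  moreover have "\<not> w j \<and> \<not> v j" if "\<not> j < B" using assms(1,2) that by (simp add: binvecs_def)
  ultimately show "w j = apply_pattern v ps j" using assms(3) by (auto simp: apply_pattern_eq)
qed

lemma hard_dec_in_binvecs: "hard_dec B \<alpha> \<in> binvecs B"
  by (simp add: binvecs_def hard_dec_def)

lemma Delta_eq_sum_flips:
  "Delta B \<alpha> w = (\<Sum>j\<in>{j. j < B \<and> w j \<noteq> hard_dec B \<alpha> j}. \<bar>\<alpha> j\<bar>)"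
proof -
  have "Delta B \<alpha> w = (\<Sum>j<B. if w j \<noteq> hard_dec B \<alpha> j then \<bar>\<alpha> j\<bar> else 0)"
    unfolding Delta_def by (intro sum.cong) auto
  also have "\<dots> = (\<Sum>j\<in>{..<B} \<inter> {j. w j \<noteq> hard_dec B \<alpha> j}. \<bar>\<alpha> j\<bar>)"
    by (simp add: sum.inter_restrict)
  finally show ?thesis by (simp add: Int_def conj_commute)
qed

lemma Delta_apply_pattern:
  assumes "distinct ps" "set ps \<subseteq> {..<B}"
  shows "Delta B \<alpha> (apply_pattern (hard_dec B \<alpha>) ps) = (\<Sum>j\<in>set ps. \<bar>\<alpha> j\<bar>)"
proof -
  have "{j. j < B \<and> apply_pattern (hard_dec B \<alpha>) ps j \<noteq> hard_dec B \<alpha> j} = set ps"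
    using assms by (auto simp: apply_pattern_eq)
  then show ?thesis by (simp add: Delta_eq_sum_flips)
qed

lemma even_card_flips_iff:
  "even (card {j. j < B \<and> w j \<noteq> v j}) \<longleftrightarrow> (even (hweight B w) \<longleftrightarrow> even (hweight B v))"
proof -
  let ?W = "{j. j < B \<and> w j}" and ?V = "{j. j < B \<and> v j}"
  have W: "?W = (?W \<inter> ?V) \<union> (?W - ?V)" and V: "?V = (?W \<inter> ?V) \<union> (?V - ?W)"
    and flips: "{j. j < B \<and> w j \<noteq> v j} = (?W - ?V) \<union> (?V - ?W)" by auto
  have "card ?W + card ?V = 2 * card (?W \<inter> ?V) + card {j. j < B \<and> w j \<noteq> v j}"
    by (subst W, subst V, subst flips) (simp add: card_Un_disjoint Int_Diff_disjoint disjoint_iff)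
  then show ?thesis unfolding hweight_def by presburger
qed

lemma even_error_set_dominated:
  fixes a :: "nat \<Rightarrow> 'b::ordered_comm_monoid_add"
  assumes nonneg: "\<And>j. 0 \<le> a j" and mono: "\<And>i j. i \<le> j \<Longrightarrow> j < B \<Longrightarrow> a i \<le> a j"
    and E: "E \<subseteq> {..<B}" "even (card E)" "E \<notin> set ` set patterns_even"
  shows "\<exists>P \<subseteq> set patterns_even. card P = 8 \<and> (\<forall>p\<in>P. sum a (set p) \<le> sum a E)"
proof -
  have not_pattern: "E \<noteq> set p" if "p \<in> set patterns_even" for p
    using E(3) that by blast
  have "finite E" using E(1) finite_subset by blast
  have "card E = 0 \<or> card E = 2 \<or> card E \<ge> 4" using E(2) by presburger
  then consider "card E = 0" | "card E = 2" | "card E \<ge> 4" by metis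
  then show ?thesis
  proof cases
    case 1
    then have "E = set []" using \<open>finite E\<close> by simp
    then show ?thesis using not_pattern[of "[]"] by (simp add: patterns_even_def)
  next
    case 2
    then obtain i j where "i < j" and E_eq: "E = {i, j}"
      by (metis card_2_iff insert_commute linorder_neqE_nat)
    have "j < B" using E(1) E_eq by auto
    have sum_E: "sum a E = a i + a j" using \<open>i < j\<close> E_eq by simp
    consider "i = 0" "j \<le> 7" | "i = 0" "j \<ge> 8" | "i \<ge> 1" "j \<le> 3" | "i \<ge> 1" "j \<ge> 4"
      by linarith
    then show ?thesis
    proof cases
      case 1
      then have "[0, j] \<in> set patterns_even" using \<open>i < j\<close> by (auto simp: patterns_even_def)
      then show ?thesis using not_pattern[of "[0, j]"] E_eq 1 by simp
    next
      case 2
      have "a t \<le> a j" if "t \<le> 7" for t using mono that 2 \<open>j < B\<close> by simp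
      then have "\<forall>p\<in>{[], [0,1], [0,2], [0,3], [0,4], [0,5], [0,6], [0,7]}. sum a (set p) \<le> sum a E"
        unfolding sum_E using 2 nonneg by (auto intro!: add_mono add_nonneg_nonneg)
      then show ?thesis by (intro exI[of _ "{[], [0,1], [0,2], [0,3], [0,4], [0,5], [0,6], [0,7]}"])
          (simp add: patterns_even_def upt_rec)
    next
      case 3
      then have "[i, j] \<in> set patterns_even" using \<open>i < j\<close> by (auto simp: patterns_even_def)
      then show ?thesis using not_pattern[of "[i, j]"] E_eq by simp
    next
      case 4
      have "a t \<le> a j" if "t \<le> 4" for t using mono that 4 \<open>j < B\<close> by simp
      moreover have "a 0 \<le> a i" "a 1 \<le> a i" using mono 4 \<open>i < j\<close> \<open>j < B\<close> by simp_all
      ultimately have "\<forall>p\<in>{[], [0,1], [0,2], [0,3], [0,4], [1,2], [1,3], [1,4]}. sum a (set p) \<le> sum a E"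
        unfolding sum_E using nonneg by (auto intro!: add_mono add_nonneg_nonneg)
      then show ?thesis by (intro exI[of _ "{[], [0,1], [0,2], [0,3], [0,4], [1,2], [1,3], [1,4]}"])
          (simp add: patterns_even_def upt_rec)
    qed
  next
    case 3
    have "\<forall>p\<in>{[], [0,1], [0,2], [0,3], [1,2], [1,3], [2,3], [0,1,2,3]}. sum a (set p) \<le> sum a E"
    proof
      fix p :: "nat list"
      assume "p \<in> {[], [0,1], [0,2], [0,3], [1,2], [1,3], [2,3], [0,1,2,3]}"
      then have "set p \<subseteq> {..<4}" by auto
      then show "sum a (set p) \<le> sum a E"
        using sum_le_sum_if_subset_lessThan[of a B E "set p" 4, OF nonneg mono E(1) _ 3] by blast
    qed
    then show ?thesis by (intro exI[of _ "{[], [0,1], [0,2], [0,3], [1,2], [1,3], [2,3], [0,1,2,3]}"])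
        (simp add: patterns_even_def upt_rec)
  qed
qed

lemma odd_error_set_dominated:
  fixes a :: "nat \<Rightarrow> 'b::ordered_comm_monoid_add"
  assumes nonneg: "\<And>j. 0 \<le> a j" and mono: "\<And>i j. i \<le> j \<Longrightarrow> j < B \<Longrightarrow> a i \<le> a j"
    and E: "E \<subseteq> {..<B}" "odd (card E)" "E \<notin> set ` set patterns_odd"
  shows "\<exists>P \<subseteq> set patterns_odd. card P = 8 \<and> (\<forall>p\<in>P. sum a (set p) \<le> sum a E)"
proof -
  have not_pattern: "E \<noteq> set p" if "p \<in> set patterns_odd" for p
    using E(3) that by blast
  have "finite E" using E(1) finite_subset by blast
  have "card E = 1 \<or> card E = 3 \<or> card E \<ge> 5" using E(2) by presburger
  then consider "card E = 1" | "card E = 3" | "card E \<ge> 5" by metis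
  then show ?thesis
  proof cases
    case 1
    then obtain i where E_eq: "E = {i}" by (rule card_1_singletonE)
    have "i < B" using E(1) E_eq by auto
    show ?thesis
    proof (cases "i < 8")
      case True
      then have "[i] \<in> set patterns_odd" by (auto simp: patterns_odd_def)
      then show ?thesis using not_pattern[of "[i]"] E_eq by simp
    next
      case False
      have "a t \<le> a i" if "t \<le> 7" for t using mono that False \<open>i < B\<close> by simp
      then have "\<forall>p\<in>{[0], [1], [2], [3], [4], [5], [6], [7]}. sum a (set p) \<le> sum a E"
        unfolding E_eq by auto
      then show ?thesis by (intro exI[of _ "{[0], [1], [2], [3], [4], [5], [6], [7]}"])
          (simp add: patterns_odd_def upt_rec)
    qed
  next
    case 2
    then obtain i j k where "i < j" "j < k" and E_eq: "E = {i, j, k}"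
      by (metis card_3_iff insert_commute linorder_cases)
    have "k < B" using E(1) E_eq by auto
    have sum_E: "sum a E = a i + (a j + a k)" using \<open>i < j\<close> \<open>j < k\<close> E_eq by simp
    show ?thesis
    proof (cases "k \<le> 3")
      case True
      then have "[i, j, k] \<in> set patterns_odd" using \<open>i < j\<close> \<open>j < k\<close>
        by (auto simp: patterns_odd_def less_Suc_eq numeral_eq_Suc)
      then show ?thesis using not_pattern[of "[i, j, k]"] E_eq by simp
    next
      case False
      have below_k: "a t \<le> a k" if "t \<le> 4" for t using mono that False \<open>k < B\<close> by simp
      then have "a t \<le> a i + (a j + a k)" if "t \<le> 4" for t
        using that nonneg by (intro add_increasing) auto
      moreover have "a 0 \<le> a i" "a 1 \<le> a j" using mono \<open>i < j\<close> \<open>j < k\<close> \<open>k < B\<close> by simp_all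
      ultimately have "\<forall>p\<in>{[0], [1], [2], [3], [4], [0,1,2], [0,1,3], [0,1,4]}. sum a (set p) \<le> sum a E"
        unfolding sum_E by (auto intro!: add_mono below_k)
      then show ?thesis by (intro exI[of _ "{[0], [1], [2], [3], [4], [0,1,2], [0,1,3], [0,1,4]}"])
          (simp add: patterns_odd_def upt_rec)
    qed
  next
    case 3
    have "\<forall>p\<in>{[0], [1], [2], [3], [4], [0,1,2], [0,1,3], [0,2,3]}. sum a (set p) \<le> sum a E"
    proof
      fix p :: "nat list"
      assume "p \<in> {[0], [1], [2], [3], [4], [0,1,2], [0,1,3], [0,2,3]}"
      then have "set p \<subseteq> {..<5}" by auto
      then show "sum a (set p) \<le> sum a E"
        using sum_le_sum_if_subset_lessThan[of a B E "set p" 5, OF nonneg mono E(1) _ 3] by blast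
    qed
    then show ?thesis by (intro exI[of _ "{[0], [1], [2], [3], [4], [0,1,2], [0,1,3], [0,2,3]}"])
        (simp add: patterns_odd_def upt_rec)
  qed
qed

lemma patterns_sorted_below_8:
  "set patterns_even \<union> set patterns_odd \<subseteq> {p. sorted_wrt (<) p \<and> set p \<subseteq> {..<8}}"
  by (simp add: patterns_even_def patterns_odd_def upt_rec)

lemma card_candC: "card (candC B \<alpha>) = 13"
proof -
  have even: "inj_on (apply_pattern (hard_dec B \<alpha>)) (set patterns_even)"
    and odd: "inj_on (apply_pattern (hard_dec B \<alpha>)) (set patterns_odd)"
    using patterns_sorted_below_8 by (auto intro!: inj_on_subset[OF inj_on_apply_pattern])
  show ?thesis
    using card_image[OF even] card_image[OF odd] unfolding candC_def Let_def
    by (simp add: patterns_even_def patterns_odd_def upt_rec)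
qed

lemma candidates_dominate_word:
  fixes \<alpha> :: "nat \<Rightarrow> real"
  assumes "B \<ge> 8" and mono: "\<And>i j. i \<le> j \<Longrightarrow> j < B \<Longrightarrow> \<bar>\<alpha> i\<bar> \<le> \<bar>\<alpha> j\<bar>"
    and w: "w \<in> spc_words B" "w \<notin> candC B \<alpha>"
  shows "\<exists>D \<subseteq> candC B \<alpha>. card D = 8 \<and> (\<forall>d\<in>D. Delta B \<alpha> d \<le> Delta B \<alpha> w)"
proof -
  define \<beta> where "\<beta> = hard_dec B \<alpha>"
  define pats where "pats = (if even (hweight B \<beta>) then patterns_even else patterns_odd)"
  have C_eq: "candC B \<alpha> = apply_pattern \<beta> ` set pats"
    by (simp add: candC_def Let_def \<beta>_def pats_def)
  have pats_below_8: "set pats \<subseteq> {p. sorted_wrt (<) p \<and> set p \<subseteq> {..<8}}"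
    using patterns_sorted_below_8 unfolding pats_def by auto
  then have sorted: "set pats \<subseteq> {ps. sorted_wrt (<) ps}" by blast
  have below_B: "\<forall>p\<in>set pats. set p \<subseteq> {..<B}" using pats_below_8 \<open>B \<ge> 8\<close> by fastforce
  define E where "E = {j. j < B \<and> w j \<noteq> \<beta> j}"
  have "w \<in> binvecs B" "even (hweight B w)" using w(1) by (auto simp: spc_words_def)
  have "E \<subseteq> {..<B}" unfolding E_def by auto
  have "E \<notin> set ` set pats"
  proof
    assume "E \<in> set ` set pats"
    then obtain p where "p \<in> set pats" "E = set p" by blast
    moreover have "distinct p" using \<open>p \<in> set pats\<close> sorted by (auto simp: strict_sorted_iff)
    ultimately have "w = apply_pattern \<beta> p"
      using binvec_eq_apply_pattern[OF hard_dec_in_binvecs \<open>w \<in> binvecs B\<close>]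
      unfolding E_def \<beta>_def by blast
    then show False using w(2) C_eq \<open>p \<in> set pats\<close> by blast
  qed
  moreover have "even (card E) \<longleftrightarrow> even (hweight B \<beta>)"
    using even_card_flips_iff[of B w \<beta>] \<open>even (hweight B w)\<close> unfolding E_def by simp
  ultimately obtain P where P: "P \<subseteq> set pats" "card P = 8"
      "\<forall>p\<in>P. (\<Sum>j\<in>set p. \<bar>\<alpha> j\<bar>) \<le> (\<Sum>j\<in>E. \<bar>\<alpha> j\<bar>)"
    using even_error_set_dominated[of "\<lambda>j. \<bar>\<alpha> j\<bar>", OF _ mono \<open>E \<subseteq> {..<B}\<close>]
      odd_error_set_dominated[of "\<lambda>j. \<bar>\<alpha> j\<bar>", OF _ mono \<open>E \<subseteq> {..<B}\<close>]
    unfolding pats_def by (cases "even (hweight B \<beta>)") auto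
  have inj: "inj_on (apply_pattern \<beta>) P"
    by (rule inj_on_subset[OF inj_on_apply_pattern]) (use P(1) sorted in blast)
  have "Delta B \<alpha> (apply_pattern \<beta> p) \<le> Delta B \<alpha> w" if "p \<in> P" for p
  proof -
    have "distinct p" "set p \<subseteq> {..<B}"
      using that P(1) sorted below_B by (auto simp: strict_sorted_iff)
    then show ?thesis
      using P(3) that Delta_apply_pattern Delta_eq_sum_flips[of B \<alpha> w] unfolding E_def \<beta>_def by simp
  qed
  then show ?thesis
    using P(1,2) by (intro exI[of _ "apply_pattern \<beta> ` P"]) (auto simp: C_eq card_image[OF inj])
qed

lemma exists_lowest_candidates:
  fixes \<alpha> :: "nat \<Rightarrow> real"
  assumes "B \<ge> 8" and mono: "\<And>i j. i \<le> j \<Longrightarrow> j < B \<Longrightarrow> \<bar>\<alpha> i\<bar> \<le> \<bar>\<alpha> j\<bar>"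
  shows "\<exists>S \<subseteq> candC B \<alpha>. card S = 8 \<and>
           (\<forall>v\<in>S. \<forall>w \<in> spc_words B - S. Delta B \<alpha> v \<le> Delta B \<alpha> w)"
proof -
  have fin: "finite (candC B \<alpha>)" by (rule card_ge_0_finite) (simp add: card_candC)
  then obtain S where S: "S \<subseteq> candC B \<alpha>" "card S = 8"
      "\<forall>v\<in>S. \<forall>w\<in>candC B \<alpha> - S. Delta B \<alpha> v \<le> Delta B \<alpha> w"
    using exists_lowest_subset[OF fin, of 8 "Delta B \<alpha>"] card_candC[of B \<alpha>] by auto
  have "Delta B \<alpha> v \<le> Delta B \<alpha> w" if v: "v \<in> S" and w: "w \<in> spc_words B - S" for v w
  proof (cases "w \<in> candC B \<alpha>")
    case True
    then have "w \<in> candC B \<alpha> - S" using w by blast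
    then show ?thesis using S(3) v by blast
  next
    case False
    obtain D where D: "D \<subseteq> candC B \<alpha>" "card D = 8" "\<forall>d\<in>D. Delta B \<alpha> d \<le> Delta B \<alpha> w"
      using candidates_dominate_word[OF assms _ False] w by blast
    show ?thesis by (rule lowest_subset_le_bound[OF fin S D v])
  qed
  then show ?thesis using S(1,2) by blast
qed

theorem proposition2:
  fixes s B :: nat and \<alpha> :: "nat \<Rightarrow> nat \<Rightarrow> real" and PM :: "nat \<Rightarrow> real"
  assumes "B = 2 ^ s" and "B \<ge> 8"
    and "\<And>l j. l < 8 \<Longrightarrow> j < B \<Longrightarrow> \<alpha> l j \<noteq> 0"
    and "\<And>l i j. l < 8 \<Longrightarrow> i < j \<Longrightarrow> j < B \<Longrightarrow> \<bar>\<alpha> l i\<bar> < \<bar>\<alpha> l j\<bar>"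
  shows "(\<forall>l<8. \<exists>S \<subseteq> candC B (\<alpha> l). card S = 8 \<and>
            (\<forall>v\<in>S. \<forall>w \<in> spc_words B - S. Delta B (\<alpha> l) v \<le> Delta B (\<alpha> l) w))
       \<and> (\<exists>T \<subseteq> {(l, v). l < 8 \<and> v \<in> candC B (\<alpha> l)}. card T = 8 \<and>
            (\<forall>(l, v)\<in>T. \<forall>l' w. l' < 8 \<and> w \<in> spc_words B \<and> (l', w) \<notin> T \<longrightarrow>
               PM l + Delta B (\<alpha> l) v \<le> PM l' + Delta B (\<alpha> l') w))"
proof -
  have paths: "\<forall>l<8. \<exists>S \<subseteq> candC B (\<alpha> l). card S = 8 \<and>
            (\<forall>v\<in>S. \<forall>w \<in> spc_words B - S. Delta B (\<alpha> l) v \<le> Delta B (\<alpha> l) w)"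
  proof (intro allI impI)
    fix l :: nat
    assume "l < 8"
    then have "\<bar>\<alpha> l i\<bar> \<le> \<bar>\<alpha> l j\<bar>" if "i \<le> j" "j < B" for i j
      using assms(4)[of l i j] that by (cases "i = j") auto
    then show "\<exists>S \<subseteq> candC B (\<alpha> l). card S = 8 \<and>
            (\<forall>v\<in>S. \<forall>w \<in> spc_words B - S. Delta B (\<alpha> l) v \<le> Delta B (\<alpha> l) w)"
      using exists_lowest_candidates[OF assms(2)] by blast
  qed
  then obtain S where S: "\<And>l. l < 8 \<Longrightarrow> S l \<subseteq> candC B (\<alpha> l) \<and> card (S l) = 8 \<and>
            (\<forall>v\<in>S l. \<forall>w \<in> spc_words B - S l. Delta B (\<alpha> l) v \<le> Delta B (\<alpha> l) w)"
    by metis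
  have "\<exists>T \<subseteq> Sigma {..<8} S. card T = 8 \<and> (\<forall>(l, v)\<in>T. \<forall>l'\<in>{..<8}. \<forall>w\<in>spc_words B.
          (l', w) \<notin> T \<longrightarrow> PM l + Delta B (\<alpha> l) v \<le> PM l' + Delta B (\<alpha> l') w)"
    using S by (intro lowest_subsets_merge) (auto simp: card_ge_0_finite lessThan_empty_iff)
  moreover have "Sigma {..<8} S \<subseteq> {(l, v). l < 8 \<and> v \<in> candC B (\<alpha> l)}" using S by auto
  ultimately show ?thesis using paths by fastforce
qed

end
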